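(* Let $N_o>0$, $\alpha>0$, and $\eta(d)=\frac{1}{(1+d)^\alpha}$. Let $C,D>0$ and let $t,r\in\mathbb{R}^2$ and $T$ a finite subset of $\mathbb{R}^2$ be such that $(t,r,T)$ satisfies the DC$(C,D)$ criterion. Then for all $P>0$, $$\mathrm{SINR}(t,r,T,P,N_o,\eta)\ \ge\ \frac{1}{(1+C)^\alpha\Big(\frac{N_o}{P}+\sum_{k=1}^{K}\frac{6k+3}{(1+kC(1+D/2))^\alpha}\Big)},$$ where $K=\Big\lfloor\frac{\max\{\|t'-r\|:t'\in T\}}{C(1+D/2)}\Big\rfloor$.
   Context: $\mathrm{SINR}(t,r,T,P,N_o,\eta)=\dfrac{P\eta(\|t-r\|)}{N_o+\sum_{t'\in T}P\eta(\|t'-r\|)}$. The triple $(t,r,T)$ satisfies DC$(C,D)$ if $\|t-r\|\le C$ and $\|t'-t''\|\ge C(2+D)$ for all distinct $t',t''\in T\cup\{t\}$. *)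

theory Defs
  imports "HOL-Analysis.Analysis"
begin

definition SINR :: "real^2 \<Rightarrow> real^2 \<Rightarrow> (real^2) set \<Rightarrow> real \<Rightarrow> real \<Rightarrow> (real \<Rightarrow> real) \<Rightarrow> real" where
  "SINR t r T P No \<eta> = P * \<eta> (norm (t - r)) / (No + (\<Sum>t'\<in>T. P * \<eta> (norm (t' - r))))"

definition DC :: "real \<Rightarrow> real \<Rightarrow> real^2 \<Rightarrow> real^2 \<Rightarrow> (real^2) set \<Rightarrow> bool" where
  "DC C D t r T \<longleftrightarrow> norm (t - r) \<le> C \<and>
     (\<forall>t'\<in>T \<union> {t}. \<forall>t''\<in>T \<union> {t}. t' \<noteq> t'' \<longrightarrow> norm (t' - t'') \<ge> C * (2 + D))"

end

theory Submission
  imports Defs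
begin

(* The wanted signal has strength at least eta(C) because |t - r| <= C. For the interference put
   R = C (1 + D/2): the transmitters in T are pairwise 2R apart and, being 2R away from t, at least
   R away from r. Sort them by the annulus k R <= |x - r| < (k + 1) R containing them. The disjoint
   R-balls around the points of the k-th annulus fit into the ring (k - 1) R <= |y - r| < (k + 2) R
   of area ((k + 2)^2 - (k - 1)^2) pi R^2 = (6k + 3) pi R^2, so that annulus holds at most 6k + 3
   transmitters, each contributing at most eta(k R). *)

lemma card_separated_in_shell:
  fixes S :: "'a::euclidean_space set" and c :: 'a and R k :: real
  assumes "R > 0" and "k \<ge> 1" and "finite S"
    and separated: "\<And>a b. a \<in> S \<Longrightarrow> b \<in> S \<Longrightarrow> a \<noteq> b \<Longrightarrow> 2 * R \<le> dist a b"
    and in_shell: "\<And>s. s \<in> S \<Longrightarrow> k * R \<le> dist s c \<and> dist s c < (k + 1) * R"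
  shows "real (card S) \<le> (k + 2) ^ DIM('a) - (k - 1) ^ DIM('a)"
proof -
  define vol where "vol \<rho> = unit_ball_vol DIM('a) * \<rho> ^ DIM('a)" for \<rho> :: real
  have measure_ball: "measure lborel (ball x \<rho>) = vol \<rho>" if "\<rho> \<ge> 0" for x :: 'a and \<rho>
    using content_ball[OF that] by (simp add: vol_def)
  have ball_fmeasurable: "ball x \<rho> \<in> fmeasurable lborel" for x :: 'a and \<rho>
    by (intro fmeasurableI emeasure_bounded_finite) auto
  define Balls where "Balls = (\<Union>s\<in>S. ball s R)"
  define inner where "inner = ball c ((k - 1) * R)"
  define outer where "outer = ball c ((k + 2) * R)"
  have "measure lborel Balls = (\<Sum>s\<in>S. measure lborel (ball s R))"
    unfolding Balls_def
  proof (rule measure_UNION')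
    show "pairwise (\<lambda>a b. disjnt (ball a R) (ball b R)) S"
      using separated by (auto simp: pairwise_def disjnt_def intro!: disjoint_ballI)
  qed (use \<open>finite S\<close> ball_fmeasurable in auto)
  then have measure_Balls: "measure lborel Balls = real (card S) * vol R"
    using \<open>R > 0\<close> by (simp add: measure_ball)
  have "open Balls"
    by (simp add: Balls_def open_UN)
  have disjoint: "Balls \<inter> inner = {}"
  proof -
    have "dist s x \<ge> R" if "s \<in> S" "x \<in> inner" for s x
      using in_shell[OF that(1)] that(2) dist_triangle[of s c x]
      by (auto simp: inner_def dist_commute algebra_simps)
    then show ?thesis by (force simp: Balls_def)
  qed
  have inside: "Balls \<union> inner \<subseteq> outer"
  proof -
    have "dist c x < (k + 2) * R" if "s \<in> S" "dist s x < R" for s x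
      using in_shell[OF that(1)] that(2) dist_triangle[of c x s]
      by (auto simp: dist_commute algebra_simps)
    moreover have "(k - 1) * R \<le> (k + 2) * R"
      using \<open>R > 0\<close> by simp
    ultimately show ?thesis
      by (fastforce simp: Balls_def inner_def outer_def)
  qed
  have "Balls \<in> fmeasurable lborel"
    using inside \<open>open Balls\<close> by (intro fmeasurableI2[OF ball_fmeasurable]) (auto simp: outer_def)
  have scaled_vol: "vol (a * R) = a ^ DIM('a) * vol R" for a
    by (simp add: vol_def power_mult_distrib)
  have "(real (card S) + (k - 1) ^ DIM('a)) * vol R = measure lborel Balls + measure lborel inner"
    using assms by (simp add: measure_Balls inner_def measure_ball scaled_vol distrib_right)
  also have "\<dots> = measure lborel (Balls \<union> inner)"
    using disjoint \<open>Balls \<in> fmeasurable lborel\<close> by (simp add: measure_Un3 inner_def ball_fmeasurable)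
  also have "\<dots> \<le> measure lborel outer"
    using inside \<open>open Balls\<close>
    by (intro measure_mono_fmeasurable) (auto simp: inner_def outer_def ball_fmeasurable)
  also have "\<dots> = (k + 2) ^ DIM('a) * vol R"
    using assms by (simp add: outer_def measure_ball scaled_vol)
  finally have "(real (card S) + (k - 1) ^ DIM('a)) * vol R \<le> (k + 2) ^ DIM('a) * vol R" .
  moreover have "vol R > 0"
    using \<open>R > 0\<close> by (simp add: vol_def)
  ultimately show ?thesis
    by simp
qed

corollary card_separated_in_plane_shell:
  fixes S :: "(real^2) set" and c :: "real^2" and R k :: real
  assumes "R > 0" and "k \<ge> 1" and "finite S"
    and "\<And>a b. a \<in> S \<Longrightarrow> b \<in> S \<Longrightarrow> a \<noteq> b \<Longrightarrow> 2 * R \<le> dist a b"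
    and "\<And>s. s \<in> S \<Longrightarrow> k * R \<le> dist s c \<and> dist s c < (k + 1) * R"
  shows "real (card S) \<le> 6 * k + 3"
  using card_separated_in_shell[OF assms] by (simp add: power2_eq_square algebra_simps)

lemma sum_le_sum_card_fibres:
  fixes f :: "'a \<Rightarrow> real" and g :: "'b \<Rightarrow> real"
  assumes "finite A" and "finite B" and "h ` A \<subseteq> B"
    and "\<And>x. x \<in> A \<Longrightarrow> f x \<le> g (h x)"
  shows "(\<Sum>x\<in>A. f x) \<le> (\<Sum>y\<in>B. real (card {x\<in>A. h x = y}) * g y)"
proof -
  have "(\<Sum>x\<in>A. f x) \<le> (\<Sum>x\<in>A. g (h x))"
    using assms(4) by (rule sum_mono)
  also have "\<dots> = (\<Sum>y\<in>B. \<Sum>x\<in>{x\<in>A. h x = y}. g (h x))"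
    using assms(1-3) by (rule sum.group[symmetric])
  also have "\<dots> = (\<Sum>y\<in>B. real (card {x\<in>A. h x = y}) * g y)"
    by (intro sum.cong) auto
  finally show ?thesis .
qed

lemma sum_decreasing_le_shell_sum:
  fixes T :: "(real^2) set" and r :: "real^2" and R :: real and f :: "real \<Rightarrow> real"
  assumes "R > 0" and "finite T"
    and separated: "\<And>a b. a \<in> T \<Longrightarrow> b \<in> T \<Longrightarrow> a \<noteq> b \<Longrightarrow> 2 * R \<le> dist a b"
    and far: "\<And>x. x \<in> T \<Longrightarrow> R \<le> norm (x - r)"
    and decreasing: "\<And>a b. 0 \<le> a \<Longrightarrow> a \<le> b \<Longrightarrow> f b \<le> f a"
    and nonneg: "\<And>a. 0 \<le> a \<Longrightarrow> 0 \<le> f a"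
  shows "(\<Sum>x\<in>T. f (norm (x - r))) \<le>
    (\<Sum>k\<in>{1..\<lfloor>Max {norm (x - r) | x. x \<in> T} / R\<rfloor>}. (6 * real_of_int k + 3) * f (real_of_int k * R))"
proof -
  define K where "K = \<lfloor>Max {norm (x - r) | x. x \<in> T} / R\<rfloor>"
  define shell where "shell x = \<lfloor>norm (x - r) / R\<rfloor>" for x
  have shell_bounds:
    "real_of_int (shell x) * R \<le> norm (x - r) \<and> norm (x - r) < (real_of_int (shell x) + 1) * R" for x
    using \<open>R > 0\<close> floor_divide_lower[of R "norm (x - r)"] floor_divide_upper[of R "norm (x - r)"]
    by (simp add: shell_def)
  have shell_range: "shell ` T \<subseteq> {1..K}"
  proof
    fix k assume "k \<in> shell ` T"
    then obtain x where "x \<in> T" "k = shell x" by blast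
    moreover have "norm (x - r) \<le> Max {norm (x - r) | x. x \<in> T}"
      using \<open>x \<in> T\<close> \<open>finite T\<close> by (intro Max_ge) auto
    ultimately show "k \<in> {1..K}"
      using far[of x] \<open>R > 0\<close> unfolding shell_def K_def
      by (auto intro!: floor_mono divide_right_mono)
  qed
  have "(\<Sum>x\<in>T. f (norm (x - r))) \<le>
      (\<Sum>k\<in>{1..K}. real (card {x\<in>T. shell x = k}) * f (real_of_int k * R))"
  proof (rule sum_le_sum_card_fibres[OF \<open>finite T\<close> _ shell_range])
    fix x assume "x \<in> T"
    then show "f (norm (x - r)) \<le> f (real_of_int (shell x) * R)"
      using shell_range shell_bounds[of x] \<open>R > 0\<close> by (intro decreasing) auto
  qed simp
  also have "\<dots> \<le> (\<Sum>k\<in>{1..K}. (6 * real_of_int k + 3) * f (real_of_int k * R))"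
  proof (rule sum_mono)
    fix k assume k: "k \<in> {1..K}"
    have "real (card {x\<in>T. shell x = k}) \<le> 6 * real_of_int k + 3"
      using k \<open>R > 0\<close> \<open>finite T\<close> separated shell_bounds
      by (intro card_separated_in_plane_shell[where c = r]) (auto simp: dist_norm)
    then show "real (card {x\<in>T. shell x = k}) * f (real_of_int k * R) \<le>
        (6 * real_of_int k + 3) * f (real_of_int k * R)"
      using k \<open>R > 0\<close> nonneg by (intro mult_right_mono) auto
  qed
  finally show ?thesis
    by (simp add: K_def)
qed

lemma SINR_eq:
  assumes "P > 0"
  shows "SINR t r T P No \<eta> = \<eta> (norm (t - r)) / (No / P + (\<Sum>x\<in>T. \<eta> (norm (x - r))))"
  using assms by (simp add: SINR_def sum_distrib_left[symmetric] field_simps)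

lemma inverse_powr_antimono:
  fixes \<alpha> a b :: real
  assumes "0 \<le> a" and "a \<le> b" and "\<alpha> \<ge> 0"
  shows "1 / (1 + b) powr \<alpha> \<le> 1 / (1 + a) powr \<alpha>"
  using assms by (intro divide_left_mono powr_mono2) auto

theorem lemma1:
  fixes No \<alpha> C D P :: real and t r :: "real^2" and T :: "(real^2) set"
  assumes "No > 0" and "\<alpha> > 0" and "C > 0" and "D > 0"
    and "finite T" and "t \<notin> T"
    and "DC C D t r T"
    and "P > 0"
  shows "SINR t r T P No (\<lambda>d. 1 / (1 + d) powr \<alpha>) \<ge>
    1 / ((1 + C) powr \<alpha> * (No / P +
      (\<Sum>k\<in>{1..\<lfloor>Max {norm (t' - r) | t'. t' \<in> T} / (C * (1 + D / 2))\<rfloor>}.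
          (6 * real_of_int k + 3) / (1 + real_of_int k * C * (1 + D / 2)) powr \<alpha>)))"
proof -
  define \<eta> where "\<eta> = (\<lambda>d::real. 1 / (1 + d) powr \<alpha>)"
  define R where "R = C * (1 + D / 2)"
  define I where "I = (\<Sum>k\<in>{1..\<lfloor>Max {norm (x - r) | x. x \<in> T} / R\<rfloor>}.
    (6 * real_of_int k + 3) * \<eta> (real_of_int k * R))"
  have "R > 0" "C \<le> R"
    using assms by (auto simp: R_def)
  have near: "norm (t - r) \<le> C"
    and separated: "\<And>a b. a \<in> insert t T \<Longrightarrow> b \<in> insert t T \<Longrightarrow> a \<noteq> b \<Longrightarrow> 2 * R \<le> dist a b"
    using \<open>DC C D t r T\<close> by (auto simp: DC_def R_def dist_norm algebra_simps)
  have far: "R \<le> norm (x - r)" if "x \<in> T" for x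
    using separated[of x t] that \<open>t \<notin> T\<close> near \<open>C \<le> R\<close> norm_triangle_ineq4[of "x - r" "t - r"]
    by (force simp: dist_norm)
  have "(\<Sum>x\<in>T. \<eta> (norm (x - r))) \<le> I"
    unfolding I_def using \<open>R > 0\<close> \<open>finite T\<close> separated far \<open>\<alpha> > 0\<close>
    by (intro sum_decreasing_le_shell_sum) (auto simp: \<eta>_def inverse_powr_antimono)
  moreover have "\<eta> C \<le> \<eta> (norm (t - r))"
    using near \<open>\<alpha> > 0\<close> by (simp add: \<eta>_def inverse_powr_antimono)
  moreover have "0 \<le> (\<Sum>x\<in>T. \<eta> (norm (x - r)))" "0 < No / P" "0 < \<eta> C"
    using assms by (auto simp: \<eta>_def intro: sum_nonneg)
  ultimately have "\<eta> C / (No / P + I) \<le> SINR t r T P No \<eta>"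
    unfolding SINR_eq[OF \<open>P > 0\<close>] by (intro frac_le) auto
  moreover have "I = (\<Sum>k\<in>{1..\<lfloor>Max {norm (t' - r) | t'. t' \<in> T} / (C * (1 + D / 2))\<rfloor>}.
      (6 * real_of_int k + 3) / (1 + real_of_int k * C * (1 + D / 2)) powr \<alpha>)"
    by (simp add: I_def R_def \<eta>_def mult.assoc)
  ultimately show ?thesis
    by (simp add: \<eta>_def)
qed

end
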